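(* If $G$ is a strongly regular graph with parameters $(n,r,e,f)$ and $n \ge 3$, then $\lambda_3(G) < \frac{n}{3}$.
   Context: A graph $G$ is strongly regular with parameters $(n,r,e,f)$ if it has $n$ vertices, is $r$-regular, every two adjacent vertices have exactly $e$ common neighbours, and every two distinct non-adjacent vertices have exactly $f$ common neighbours (disconnected graphs and graphs with disconnected complement are allowed). $\lambda_3(G)$ is the third largest eigenvalue (with multiplicity) of the adjacency matrix of $G$. *)

theory Defs
  imports "Jordan_Normal_Form.Char_Poly"
begin

definition simple_graph :: "nat \<Rightarrow> (nat \<Rightarrow> nat \<Rightarrow> bool) \<Rightarrow> bool" where
  "simple_graph n E \<longleftrightarrow> (\<forall>i<n. \<forall>j<n. E i j \<longleftrightarrow> E j i) \<and> (\<forall>i<n. \<not> E i i)"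

definition neighbours :: "nat \<Rightarrow> (nat \<Rightarrow> nat \<Rightarrow> bool) \<Rightarrow> nat \<Rightarrow> nat set" where
  "neighbours n E i = {k. k < n \<and> E i k}"

definition strongly_regular ::
  "nat \<Rightarrow> (nat \<Rightarrow> nat \<Rightarrow> bool) \<Rightarrow> nat \<Rightarrow> nat \<Rightarrow> nat \<Rightarrow> bool" where
  "strongly_regular n E r e f \<longleftrightarrow>
     simple_graph n E \<and>
     (\<forall>i<n. card (neighbours n E i) = r) \<and>
     (\<forall>i<n. \<forall>j<n. i \<noteq> j \<longrightarrow> E i j \<longrightarrow>
        card (neighbours n E i \<inter> neighbours n E j) = e) \<and>
     (\<forall>i<n. \<forall>j<n. i \<noteq> j \<longrightarrow> \<not> E i j \<longrightarrow>
        card (neighbours n E i \<inter> neighbours n E j) = f)"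

definition adj_matrix :: "nat \<Rightarrow> (nat \<Rightarrow> nat \<Rightarrow> bool) \<Rightarrow> real mat" where
  "adj_matrix n E = mat n n (\<lambda>(i, j). if E i j then 1 else 0)"

text \<open>Eigenvalues with multiplicity (roots of the characteristic polynomial,
  which splits over the reals for a symmetric real matrix), in non-increasing order.\<close>
definition eigenvalues_desc :: "real mat \<Rightarrow> real list" where
  "eigenvalues_desc A = rev (sorted_list_of_multiset (proots (char_poly A)))"

definition lambda3 :: "real mat \<Rightarrow> real" where
  "lambda3 A = eigenvalues_desc A ! 2"

end

theory Submission
  imports Defs "Jordan_Normal_Form.Schur_Decomposition"
begin

text \<open>
  With \<open>J\<close> the all-ones matrix, the adjacency matrix satisfies \<open>A\<^sup>2 = (r - f) I + (e - f) A + f J\<close>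
  and \<open>A J = r J\<close>, so every eigenvalue is \<open>r\<close> or a root \<open>s \<ge> 0 \<ge> t\<close> of
  \<open>x\<^sup>2 - (e - f) x - (r - f)\<close>. The traces of \<open>A\<close> and \<open>A\<^sup>2\<close> give \<open>\<Sum> \<lambda> = 0\<close> and \<open>\<Sum> \<lambda>\<^sup>2 = n r\<close>.
  Suppose \<open>\<lambda>\<^sub>3 \<ge> n / 3\<close>. Summing the nonnegative quantities \<open>(\<lambda> - s)(\<lambda> - t)\<close> (or
  \<open>\<lambda> (\<lambda> + 1)\<close> when \<open>f = 0\<close>) over the spectrum shows that \<open>r\<close> has multiplicity at most
  \<open>n / (r + 1)\<close>, so \<open>\<lambda>\<^sub>3 = r\<close> is impossible. Otherwise \<open>\<lambda>\<^sub>3 = s < r = \<lambda>\<^sub>1\<close>, and summing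
  \<open>\<lambda> (\<lambda> - t) \<ge> \<lambda>\<^sup>2\<close> rules out every spectrum except \<open>r, s, s, t, \<dots>, t\<close>, which fails by
  an integrality argument.
\<close>

lemma smult_mat_mult_mat_vec:
  assumes "v \<in> carrier_vec (dim_col A)"
  shows "(a \<cdot>\<^sub>m A) *\<^sub>v v = a \<cdot>\<^sub>v (A *\<^sub>v v)"
  using assms by (intro eq_vecI) (auto simp: scalar_prod_def sum_distrib_left ac_simps)

lemma smult_vec_cancel:
  fixes a b :: "'a::idom"
  assumes "a \<cdot>\<^sub>v v = b \<cdot>\<^sub>v v" "v \<in> carrier_vec n" "v \<noteq> 0\<^sub>v n"
  shows "a = b"
proof -
  obtain i where "i < n" "v $ i \<noteq> 0"
    using assms(2,3) by (metis eq_vecI carrier_vecD index_zero_vec)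
  then show ?thesis
    using arg_cong[OF assms(1), of "\<lambda>w. w $ i"] assms(2) by auto
qed

lemma eigenvalue_root_of_quadratic_relation:
  fixes A :: "'a::field mat" and n :: nat
  defines "ones \<equiv> vec n (\<lambda>_. 1)" and "J \<equiv> mat n n (\<lambda>_. 1)"
  assumes A: "A \<in> carrier_mat n n"
    and row_sums: "A *\<^sub>v ones = r \<cdot>\<^sub>v ones"
    and square: "A * A = R \<cdot>\<^sub>m 1\<^sub>m n + k \<cdot>\<^sub>m A + F \<cdot>\<^sub>m J"
    and "eigenvalue A \<mu>"
  shows "(\<mu> - r) * (\<mu>\<^sup>2 - k * \<mu> - R) = 0"
proof -
  obtain v where v: "v \<in> carrier_vec n" "v \<noteq> 0\<^sub>v n" and Av: "A *\<^sub>v v = \<mu> \<cdot>\<^sub>v v"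
    using \<open>eigenvalue A \<mu>\<close> A unfolding eigenvalue_def eigenvector_def by auto
  define S where "S = (\<Sum>i<n. v $ i)"
  define c where "c = \<mu>\<^sup>2 - k * \<mu> - R"
  have Jv: "J *\<^sub>v v = S \<cdot>\<^sub>v ones"
    using v by (auto simp: J_def ones_def S_def scalar_prod_def atLeast0LessThan)
  have "\<mu>\<^sup>2 \<cdot>\<^sub>v v = (A * A) *\<^sub>v v"
    using A v Av by (simp add: mult_mat_vec smult_smult_assoc power2_eq_square)
  also have "\<dots> = R \<cdot>\<^sub>v v + (k * \<mu>) \<cdot>\<^sub>v v + (F * S) \<cdot>\<^sub>v ones"
    unfolding square using A v Av Jv
    by (simp add: add_mult_distrib_mat_vec[where nr = n and nc = n] J_def
        smult_mat_mult_mat_vec smult_smult_assoc)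
  finally have eq: "\<mu>\<^sup>2 \<cdot>\<^sub>v v = R \<cdot>\<^sub>v v + (k * \<mu>) \<cdot>\<^sub>v v + (F * S) \<cdot>\<^sub>v ones" .
  \<comment> \<open>so \<open>c \<cdot> v\<close> is a multiple of the all-ones vector, on which \<open>A\<close> acts as \<open>r\<close>\<close>
  have cv: "c \<cdot>\<^sub>v v = (F * S) \<cdot>\<^sub>v ones"
  proof (rule eq_vecI)
    fix i assume "i < dim_vec ((F * S) \<cdot>\<^sub>v ones)"
    then have i: "i < n" by (simp add: ones_def)
    have "(\<mu>\<^sup>2 \<cdot>\<^sub>v v) $ i = (R \<cdot>\<^sub>v v + (k * \<mu>) \<cdot>\<^sub>v v + (F * S) \<cdot>\<^sub>v ones) $ i"
      using eq by simp
    then show "(c \<cdot>\<^sub>v v) $ i = ((F * S) \<cdot>\<^sub>v ones) $ i"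
      using i v by (simp add: c_def ones_def algebra_simps)
  qed (use v in \<open>simp add: ones_def\<close>)
  have "(c * \<mu>) \<cdot>\<^sub>v v = A *\<^sub>v (c \<cdot>\<^sub>v v)"
    using A v Av by (simp add: mult_mat_vec smult_smult_assoc mult.commute)
  also have "\<dots> = r \<cdot>\<^sub>v (c \<cdot>\<^sub>v v)"
    using A row_sums cv by (simp add: mult_mat_vec ones_def smult_smult_assoc mult.commute)
  finally have "(c * \<mu>) \<cdot>\<^sub>v v = (r * c) \<cdot>\<^sub>v v"
    by (simp add: smult_smult_assoc)
  then have "c * \<mu> = r * c"
    using v by (rule smult_vec_cancel)
  then show ?thesis
    unfolding c_def by (simp add: algebra_simps)
qed

lemma Reals_if_root_of_real_quadratic:
  fixes z :: complex and k R :: real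
  assumes root: "z\<^sup>2 - of_real k * z - of_real R = 0" and discr: "0 \<le> k\<^sup>2 + 4 * R"
  shows "z \<in> \<real>"
proof (rule ccontr)
  assume "z \<notin> \<real>"
  then have im: "Im z \<noteq> 0" by (simp add: complex_is_Real_iff)
  have "(2 * Re z - k) * Im z = 0"
    using arg_cong[OF root, of Im] by (simp add: power2_eq_square algebra_simps)
  with im have k: "k = 2 * Re z" by simp
  have "R = (Re z)\<^sup>2 - (Im z)\<^sup>2 - k * Re z"
    using arg_cong[OF root, of Re] by (simp add: power2_eq_square)
  then have "k\<^sup>2 + 4 * R = (k - 2 * Re z)\<^sup>2 - 4 * (Im z)\<^sup>2"
    by (simp add: power2_eq_square algebra_simps)
  with k im discr show False by simp
qed

interpretation of_real_poly_hom: map_poly_inj_idom_hom "of_real :: real \<Rightarrow> complex" ..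

lemma char_poly_splits_if_eigenvalues_real:
  fixes A :: "real mat"
  assumes A: "A \<in> carrier_mat n n"
    and real: "\<And>\<mu>. eigenvalue (map_mat complex_of_real A) \<mu> \<Longrightarrow> \<mu> \<in> \<real>"
  obtains es where "char_poly A = (\<Prod>e\<leftarrow>es. [:- e, 1:])" "length es = n"
proof -
  have Ac: "map_mat complex_of_real A \<in> carrier_mat n n" using A by simp
  obtain as where as: "char_poly (map_mat complex_of_real A) = (\<Prod>a\<leftarrow>as. [:- a, 1:])" "length as = n"
    using char_poly_factorized[OF Ac] by auto
  define es where "es = map Re as"
  have "a \<in> \<real>" if "a \<in> set as" for a
    using real eigenvalue_root_char_poly[OF Ac] that
    by (auto simp: as(1) poly_prod_list prod_list_zero_iff)
  then have as_es: "as = map complex_of_real es"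
    unfolding es_def by (induction as) (auto simp: complex_is_Real_iff complex_eq_iff)
  have "char_poly (map_mat complex_of_real A) = map_poly complex_of_real (char_poly A)"
    by (rule of_real_hom.char_poly_hom[OF A])
  then have "map_poly complex_of_real (char_poly A) = map_poly complex_of_real (\<Prod>e\<leftarrow>es. [:- e, 1:])"
    using as(1) as_es
    by (simp add: of_real_poly_hom.hom_prod_list o_def map_poly_pCons)
  then have "char_poly A = (\<Prod>e\<leftarrow>es. [:- e, 1:])"
    by (rule of_real_poly_hom.injectivity)
  moreover have "length es = n" using as(2) by (simp add: es_def)
  ultimately show ?thesis using that by simp
qed

lemma proots_linear_factors: "proots (\<Prod>e\<leftarrow>es. [:- e, 1:]) = mset es"
proof (induction es)
  case (Cons a es)
  have "(\<Prod>e\<leftarrow>es. [:- e, 1:]) \<noteq> 0" by (auto simp: prod_list_zero_iff)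
  then have "proots ([:- a, 1:] * (\<Prod>e\<leftarrow>es. [:- e, 1:])) = proots [:- a, 1:] + proots (\<Prod>e\<leftarrow>es. [:- e, 1:])"
    by (intro proots_mult) auto
  with Cons show ?case by simp
qed simp

definition mat_trace :: "'a::comm_monoid_add mat \<Rightarrow> 'a" where
  "mat_trace A = (\<Sum>i<dim_row A. A $$ (i, i))"

lemma mat_trace_mult_comm:
  fixes A B :: "'a::comm_semiring_0 mat"
  assumes "A \<in> carrier_mat n m" "B \<in> carrier_mat m n"
  shows "mat_trace (A * B) = mat_trace (B * A)"
proof -
  have "mat_trace (A * B) = (\<Sum>i<n. \<Sum>j<m. A $$ (i, j) * B $$ (j, i))"
    using assms by (simp add: mat_trace_def scalar_prod_def atLeast0LessThan)
  also have "\<dots> = (\<Sum>j<m. \<Sum>i<n. B $$ (j, i) * A $$ (i, j))"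
    by (subst sum.swap) (simp add: mult.commute)
  also have "\<dots> = mat_trace (B * A)"
    using assms by (simp add: mat_trace_def scalar_prod_def atLeast0LessThan)
  finally show ?thesis .
qed

lemma mat_trace_similar_mat_wit:
  fixes A :: "'a::comm_semiring_1 mat"
  assumes "similar_mat_wit A B P Q"
  shows "mat_trace A = mat_trace B"
proof -
  define n where "n = dim_row A"
  have car: "A \<in> carrier_mat n n" "B \<in> carrier_mat n n" "P \<in> carrier_mat n n" "Q \<in> carrier_mat n n"
    and QP: "Q * P = 1\<^sub>m n" and A: "A = P * (B * Q)"
    using similar_mat_witD[OF n_def assms] by (auto simp: assoc_mult_mat[of _ n n _ n _ n])
  have "mat_trace A = mat_trace (B * Q * P)"
    unfolding A using car by (intro mat_trace_mult_comm) auto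
  also have "B * Q * P = B"
    using car QP by (simp add: assoc_mult_mat[of _ n n _ n _ n])
  finally show ?thesis .
qed

lemma upper_triangular_mult:
  assumes "A \<in> carrier_mat n n" "B \<in> carrier_mat n n"
    and "upper_triangular A" "upper_triangular B"
  shows "upper_triangular (A * B)"
    and "i < n \<Longrightarrow> (A * B) $$ (i, i) = A $$ (i, i) * B $$ (i, i)"
proof -
  have vanish: "A $$ (i, k) * B $$ (k, j) = 0" if "i < n" "k < n" "j \<le> i" "k \<noteq> i \<or> j \<noteq> i" for i j k
  proof (cases "k < i")
    case True
    then show ?thesis using that assms by (simp add: upper_triangularD)
  next
    case False
    then have "j < k" using that by auto
    then show ?thesis using that assms by (simp add: upper_triangularD)
  qed
  show "upper_triangular (A * B)"
    using assms vanish by (intro upper_triangularI) (auto simp: scalar_prod_def intro!: sum.neutral)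
  show "(A * B) $$ (i, i) = A $$ (i, i) * B $$ (i, i)" if "i < n"
  proof -
    have "(A * B) $$ (i, i) = (\<Sum>k\<in>{0..<n}. A $$ (i, k) * B $$ (k, i))"
      using assms that by (simp add: scalar_prod_def)
    also have "\<dots> = A $$ (i, i) * B $$ (i, i)"
      using that vanish by (subst sum.remove[of _ i]) (auto intro!: sum.neutral)
    finally show ?thesis .
  qed
qed

lemma upper_triangular_pow:
  assumes A: "A \<in> carrier_mat n n" and "upper_triangular A"
  shows "upper_triangular (A ^\<^sub>m k) \<and> (\<forall>i<n. (A ^\<^sub>m k) $$ (i, i) = A $$ (i, i) ^ k)"
proof (induction k)
  case 0
  then show ?case using A by auto
next
  case (Suc k)
  have "A ^\<^sub>m k \<in> carrier_mat n n" using A by simp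
  with Suc.IH show ?case
    using upper_triangular_mult[of "A ^\<^sub>m k" n A] assms by (simp add: power_commutes)
qed

lemma mat_trace_pow_char_poly:
  fixes A :: "'a::conjugatable_ordered_field mat"
  assumes A: "A \<in> carrier_mat n n" and cp: "char_poly A = (\<Prod>e\<leftarrow>es. [:- e, 1:])"
  shows "mat_trace (A ^\<^sub>m k) = (\<Sum>e\<leftarrow>es. e ^ k)"
proof -
  obtain B P Q where "schur_decomposition A es = (B, P, Q)"
    by (cases "schur_decomposition A es")
  with schur_decomposition[OF A cp] have sim: "similar_mat_wit A B P Q"
    and B: "upper_triangular B" and diag: "diag_mat B = es" by auto
  have B_car: "B \<in> carrier_mat n n"
    using similar_mat_witD2[OF A sim] by auto
  have "mat_trace (A ^\<^sub>m k) = mat_trace (B ^\<^sub>m k)"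
    using similar_mat_wit_pow[OF sim] by (rule mat_trace_similar_mat_wit)
  also have "\<dots> = (\<Sum>i<n. B $$ (i, i) ^ k)"
    using upper_triangular_pow[OF B_car B] B_car by (simp add: mat_trace_def)
  also have "\<dots> = (\<Sum>e\<leftarrow>diag_mat B. e ^ k)"
    using B_car by (simp add: diag_mat_def sum_list_sum_nth atLeast0LessThan)
  finally show ?thesis unfolding diag .
qed

lemma real_quadratic_roots_opposite_signs:
  fixes k R :: real
  assumes "0 \<le> R"
  obtains s t where "t \<le> 0" "0 \<le> s" "s + t = k" "s * t = - R"
proof
  define d where "d = sqrt (k\<^sup>2 + 4 * R)"
  have d: "d\<^sup>2 = k\<^sup>2 + 4 * R" "\<bar>k\<bar> \<le> d"
    using assms by (auto simp: d_def real_le_rsqrt)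
  show "(k - d) / 2 \<le> 0" "0 \<le> (k + d) / 2" using d(2) by auto
  show "(k + d) / 2 + (k - d) / 2 = k" by (simp add: field_simps)
  show "(k + d) / 2 * ((k - d) / 2) = - R"
    using d(1) by (simp add: field_simps power2_eq_square)
qed

lemma sum_list_quadratic:
  fixes L :: "'a::comm_ring_1 list"
  shows "(\<Sum>x\<leftarrow>L. (x - a) * (x - b)) = (\<Sum>x\<leftarrow>L. x\<^sup>2) - (a + b) * sum_list L + of_nat (length L) * (a * b)"
  by (induction L) (simp_all add: algebra_simps power2_eq_square)

lemma Ints_if_Rats_root_of_monic_quadratic:
  fixes u p q :: real
  assumes "u \<in> \<rat>" "p \<in> \<int>" "q \<in> \<int>" and root: "u\<^sup>2 + p * u + q = 0"
  shows "u \<in> \<int>"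
proof -
  obtain a b :: int where b: "b > 0" "coprime a b" and u: "u = of_int a / of_int b"
    using Rats_cases'[OF assms(1)] by metis
  obtain P Q :: int where p: "p = of_int P" and q: "q = of_int Q"
    using assms(2,3) Ints_cases by metis
  have "of_int (a\<^sup>2 + P * a * b + Q * b\<^sup>2) = (of_int b)\<^sup>2 * (u\<^sup>2 + p * u + q)"
    using b(1) by (simp add: u p q field_simps power2_eq_square)
  then have "a\<^sup>2 = b * (- P * a - Q * b)"
    using root by (simp only: mult_zero_right of_int_eq_0_iff) (simp add: algebra_simps power2_eq_square)
  then have "b dvd a\<^sup>2" by simp
  moreover have "coprime b (a\<^sup>2)"
    using b(2) by (simp add: coprime_commute)
  ultimately have "b dvd 1"
    using coprime_dvd_mult_left_iff[of b "a\<^sup>2" 1] by simp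
  then have "b = 1" using b(1) by simp
  then show ?thesis by (simp add: u)
qed

lemma neg_root_Ints:
  fixes n r :: nat and s t :: real
  assumes "n \<noteq> 5" and trace: "real r + 2 * s + (real n - 3) * t = 0"
    and ints: "s + t \<in> \<int>" "s * t \<in> \<int>"
  shows "- t \<in> \<int>"
proof -
  have "(real n - 5) * (- t) = real r + 2 * (s + t)"
    using trace by (simp add: algebra_simps)
  then have "- t = (real r + 2 * (s + t)) / (real n - 5)"
    using \<open>n \<noteq> 5\<close> by (simp add: field_simps)
  also have "\<dots> \<in> \<rat>"
  proof -
    have "(real r + 2 * p) / (real n - 5) \<in> \<rat>" if "p \<in> \<rat>" for p
      using that by (intro Rats_divide Rats_add Rats_mult) auto
    then show ?thesis using ints(1) Ints_subset_Rats by blast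
  qed
  finally have "- t \<in> \<rat>" .
  moreover have "(- t)\<^sup>2 + (s + t) * (- t) + s * t = 0"
    by (simp add: power2_eq_square algebra_simps)
  ultimately show ?thesis
    using Ints_if_Rats_root_of_monic_quadratic ints by blast
qed

lemma no_double_eigenvalue_above_third_large_root:
  fixes n r :: nat and s u :: real
  assumes "1 \<le> s" "3 < real n" "2 \<le> u"
    and trace1: "(real n - 3) * u = r + 2 * s"
    and trace2: "(real r)\<^sup>2 + 2 * s\<^sup>2 + (real n - 3) * u\<^sup>2 = real n * real r"
  shows False
proof -
  have "2 * (r + 2 * s) \<le> u * (r + 2 * s)"
    using assms(1,3) by (intro mult_right_mono) auto
  then have A: "(real r)\<^sup>2 + 2 * s\<^sup>2 + 2 * (r + 2 * s) \<le> real n * real r"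
    using trace1 trace2 by (simp add: power2_eq_square algebra_simps)
  have "(real n - 3) * 2 \<le> (real n - 3) * u"
    using assms(2,3) by (intro mult_left_mono) auto
  then have "real n \<le> (r + 2 * s) / 2 + 3"
    unfolding trace1 by (simp add: field_simps)
  then have B: "real n * real r \<le> ((r + 2 * s) / 2 + 3) * real r"
    by (rule mult_right_mono) simp
  have "(r - s - 1)\<^sup>2 + 3 * s\<^sup>2 + 6 * s - 1
      = 2 * (((real r)\<^sup>2 + 2 * s\<^sup>2 + 2 * (r + 2 * s)) - ((r + 2 * s) / 2 + 3) * real r)"
    by (simp add: power2_eq_square field_simps)
  also have "\<dots> \<le> 0"
    using A B by argo
  finally have "(r - s - 1)\<^sup>2 + 3 * s\<^sup>2 + 6 * s - 1 \<le> 0" .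
  with assms(1) show False
    by (smt (verit) zero_le_power2)
qed

text \<open>For \<open>n \<noteq> 5\<close> the first trace
  equation makes \<open>-t\<close> rational, hence an integer, and \<open>-t \<ge> 2\<close> is too large for the second.\<close>

lemma no_double_eigenvalue_above_third:
  fixes n r :: nat and s t :: real
  assumes s: "n / 3 \<le> s" "s < r" and t: "t \<le> 0"
    and trace1: "real r + 2 * s + (real n - 3) * t = 0"
    and trace2: "(real r)\<^sup>2 + 2 * s\<^sup>2 + (real n - 3) * t\<^sup>2 = real n * real r"
    and ints: "s + t \<in> \<int>" "s * t \<in> \<int>"
  shows False
proof -
  define u where "u = - t"
  have u: "0 \<le> u" "(real n - 3) * u = r + 2 * s"
    "(real r)\<^sup>2 + 2 * s\<^sup>2 + (real n - 3) * u\<^sup>2 = real n * real r"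
    using t trace1 trace2 by (simp_all add: u_def algebra_simps)
  have n_lt: "n < r + 2 * s"
    using s by linarith
  then have "0 < (real n - 3) * u"
    using u(2) s by linarith
  then have n3: "3 < real n"
    using u(1) by (metis diff_gt_0_iff_gt not_le mult_nonpos_nonneg)
  have "real n - 3 < (real n - 3) * u"
    unfolding u(2) using n_lt by linarith
  then have u1: "1 < u"
    using n3 by (simp add: mult_less_cancel_left1)
  show False
  proof (cases "n = 5")
    case True
    have "5 / 2 < u" using u(2) s True by simp
    then have "(5 / 2)\<^sup>2 < u\<^sup>2" by (rule power_strict_mono) auto
    moreover have "(5 / 3)\<^sup>2 \<le> s\<^sup>2" using s True by (intro power_mono) auto
    moreover have "5 * real r - (real r)\<^sup>2 \<le> 25 / 4"
      using sum_power2_ge_zero[of "r - 5 / 2" 0] by (simp add: power2_eq_square algebra_simps)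
    ultimately show False using u(3) True by (simp add: power2_eq_square)
  next
    case False
    have "u \<in> \<int>"
      using neg_root_Ints[OF False trace1 ints] by (simp add: u_def)
    then obtain z where "u = of_int z" by (rule Ints_cases)
    with u1 have "2 \<le> u" by simp
    moreover have "1 \<le> s" using s n3 by simp
    ultimately show False
      using no_double_eigenvalue_above_third_large_root[OF _ n3 _ u(2,3)] by blast
  qed
qed

lemma sum_list_map_eq_if_mset_eq:
  fixes g :: "'a \<Rightarrow> 'b::comm_monoid_add"
  assumes "mset xs = mset ys"
  shows "(\<Sum>x\<leftarrow>xs. g x) = (\<Sum>x\<leftarrow>ys. g x)"
  using arg_cong[OF assms, of "\<lambda>M. sum_mset (image_mset g M)"]
  by (simp only: mset_map[symmetric] sum_mset_sum_list)

lemma count_list_mult_le_sum_list: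
  fixes g :: "'a \<Rightarrow> 'b::linordered_semidom"
  assumes "\<And>x. x \<in> set L \<Longrightarrow> 0 \<le> g x"
  shows "of_nat (count_list L y) * g y \<le> (\<Sum>x\<leftarrow>L. g x)"
  using assms by (induction L) (auto simp: algebra_simps add_increasing add_increasing2 sum_list_nonneg)

locale srg_spectrum =
  fixes n r e f :: nat and s t :: real and L :: "real list"
  assumes length_L: "length L = n"
    and sum_L: "sum_list L = 0"
    and sum_squares_L: "(\<Sum>x\<leftarrow>L. x\<^sup>2) = real n * real r"
    and degree_in_L: "real r \<in> set L"
    and L_subset: "set L \<subseteq> {real r, s, t}"
    and t_nonpos: "t \<le> 0" and s_nonneg: "0 \<le> s"
    and roots_sum: "s + t = real e - real f"
    and roots_prod: "s * t = real f - real r"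
    and e_less_r: "0 < r \<Longrightarrow> e < r"
begin

lemma sum_weight: "(\<Sum>x\<leftarrow>L. x * (x - t)) = real n * real r"
  using sum_list_quadratic[of 0 t L] by (simp add: sum_L sum_squares_L)

lemma weight_nonneg: "x \<in> set L \<Longrightarrow> 0 \<le> x * (x - t)"
  using L_subset t_nonpos s_nonneg by auto

lemma sum_quad: "(\<Sum>x\<leftarrow>L. (x - s) * (x - t)) = real n * real f"
  using sum_list_quadratic[of s t L]
  by (simp add: sum_L sum_squares_L length_L roots_prod algebra_simps)

lemma quad_off_degree: "x \<in> set L \<Longrightarrow> x \<noteq> r \<Longrightarrow> (x - s) * (x - t) = 0"
  using L_subset by auto

lemma quad_at_degree:
  assumes "0 < r"
  shows "real f * (real r + 1) \<le> (r - s) * (r - t)"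
proof -
  have "(r - s) * (r - t) = (real r)\<^sup>2 - (s + t) * r + s * t"
    by (simp add: algebra_simps power2_eq_square)
  also have "\<dots> = real r * (real r - real e - 1) + real f * (real r + 1)"
    unfolding roots_sum roots_prod by (simp add: algebra_simps power2_eq_square)
  finally have "(r - s) * (r - t) = real r * (real r - real e - 1) + real f * (real r + 1)" .
  moreover have "0 \<le> real r * (real r - real e - 1)"
    using e_less_r assms by (intro mult_nonneg_nonneg) auto
  ultimately show ?thesis by linarith
qed

lemma quad_nonneg:
  assumes "x \<in> set L" "0 < r"
  shows "0 \<le> (x - s) * (x - t)"
proof (cases "x = r")
  case True
  then show ?thesis using quad_at_degree[OF assms(2)] by (simp add: order_trans[rotated])
next
  case False
  then show ?thesis using quad_off_degree[OF assms(1)] by auto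
qed

lemma quad_at_degree_le_sum: "0 < r \<Longrightarrow> (r - s) * (r - t) \<le> real n * real f"
  unfolding sum_quad[symmetric] using degree_in_L quad_nonneg
  by (intro member_le_sum_list) auto

lemma roots_if_f_zero:
  assumes "f = 0" "0 < r"
  shows "s = r \<and> t = -1"
proof -
  have "(r - s) * (r - t) = 0"
    using quad_at_degree_le_sum quad_at_degree assms by (simp add: order_antisym)
  moreover have "t < r" using t_nonpos assms(2) by simp
  ultimately have "s = r" by simp
  with roots_prod assms have "(t + 1) * r = 0" by (simp add: algebra_simps)
  with \<open>s = r\<close> assms show ?thesis by simp
qed

lemma s_less_r_if_f_pos:
  assumes "0 < f" "0 < r"
  shows "s < r"
proof -
  have "0 < (r - s) * (r - t)"
    using quad_at_degree[OF assms(2)] assms by (smt (verit) mult_pos_pos of_nat_0_less_iff)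
  moreover have "t < r" using t_nonpos assms(2) by simp
  ultimately show ?thesis by (simp add: zero_less_mult_iff)
qed

lemma degree_multiplicity_bound:
  assumes "0 < r"
  shows "count_list L r * (r + 1) \<le> n"
proof (cases "f = 0")
  case True
  with roots_if_f_zero assms have t: "t = -1" by simp
  have "count_list L r * (r * (r - t)) \<le> (\<Sum>x\<leftarrow>L. x * (x - t))"
    using count_list_mult_le_sum_list[of L "\<lambda>x. x * (x - t)" "real r"] weight_nonneg by simp
  then have "real r * (count_list L r * (r + 1)) \<le> real r * n"
    unfolding sum_weight by (simp add: t algebra_simps)
  then show ?thesis using assms by (simp only: mult_le_cancel_left_pos of_nat_0_less_iff of_nat_le_iff)
next
  case False
  have "count_list L r * (real f * (real r + 1)) \<le> count_list L r * ((r - s) * (r - t))"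
    using quad_at_degree assms by (intro mult_left_mono) auto
  also have "\<dots> \<le> (\<Sum>x\<leftarrow>L. (x - s) * (x - t))"
    using count_list_mult_le_sum_list[of L "\<lambda>x. (x - s) * (x - t)" "real r"] quad_nonneg assms by simp
  finally have "real f * (count_list L r * (r + 1)) \<le> real f * n"
    unfolding sum_quad by (simp add: algebra_simps)
  then show ?thesis using False by (simp only: mult_le_cancel_left_pos of_nat_0_less_iff of_nat_le_iff)
qed

lemma s_le_r: "0 < r \<Longrightarrow> s \<le> r"
  using roots_if_f_zero s_less_r_if_f_pos by (cases "f = 0") auto

lemma weight_ge_square: "0 \<le> x \<Longrightarrow> x\<^sup>2 \<le> x * (x - t)"
  using t_nonpos by (simp add: power2_eq_square algebra_simps mult_nonpos_nonneg)

lemma degree_pos: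
  assumes "x \<in> set L" "x \<noteq> 0"
  shows "0 < r"
proof -
  have "x\<^sup>2 \<le> real n * real r"
    unfolding sum_squares_L[symmetric] using assms(1) by (intro member_le_sum_list) auto
  moreover have "0 < x\<^sup>2" using assms(2) by simp
  ultimately have "0 < real n * real r" by linarith
  then show ?thesis by (simp add: zero_less_mult_iff)
qed

lemma spectrum_r_s_s_t_impossible:
  assumes L: "L = r # s # s # rest" and rest: "\<forall>x\<in>set rest. x = t"
    and "n / 3 \<le> s" "s < r" "3 \<le> n"
  shows False
proof -
  have "length rest = n - 3"
    using length_L unfolding L by simp
  with rest have rest: "rest = replicate (n - 3) t"
    by (metis replicate_length_same)
  have "real r + 2 * s + (real n - 3) * t = 0"
    using sum_L \<open>3 \<le> n\<close> unfolding L rest by (simp add: sum_list_replicate of_nat_diff)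
  moreover have "(real r)\<^sup>2 + 2 * s\<^sup>2 + (real n - 3) * t\<^sup>2 = real n * real r"
    using sum_squares_L \<open>3 \<le> n\<close> unfolding L rest by (simp add: sum_list_replicate of_nat_diff)
  moreover have "s + t \<in> \<int>" "s * t \<in> \<int>"
    unfolding roots_sum roots_prod by simp_all
  ultimately show False
    using no_double_eigenvalue_above_third assms(3,4) t_nonpos by blast
qed

lemma third_largest_eq_s_impossible:
  assumes L: "L = a # b # s # rest" and sorted: "sorted_wrt (\<ge>) L"
    and s: "n / 3 \<le> s" "s \<noteq> r" and n3: "3 \<le> n"
  shows False
proof -
  have "1 \<le> s" using s n3 by simp
  then have r_pos: "0 < r" using degree_pos[of s] unfolding L by simp
  have "s < r" using s_le_r[OF r_pos] s(2) by simp
  have order: "s \<le> b" "b \<le> a" "\<forall>x\<in>set rest. x \<le> s" "real r \<le> a"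
    using sorted degree_in_L unfolding L by auto
  then have "a = r" and b: "b = r \<or> b = s"
    using L_subset \<open>s < r\<close> t_nonpos \<open>1 \<le> s\<close> unfolding L by auto
  have w_rest: "0 \<le> (\<Sum>x\<leftarrow>rest. x * (x - t))"
    using weight_nonneg unfolding L by (intro sum_list_nonneg) auto
  have w_top: "a * (a - t) + b * (b - t) + s * (s - t) + (\<Sum>x\<leftarrow>rest. x * (x - t)) = real n * real r"
    using sum_weight unfolding L by simp
  show False
  proof (cases "b = r")
    case True
    have "2 * (real r)\<^sup>2 + s\<^sup>2 \<le> real n * real r"
      using w_top w_rest weight_ge_square[of r] weight_ge_square[of s] \<open>a = r\<close> True \<open>1 \<le> s\<close> by simp
    moreover have "s\<^sup>2 \<ge> (n / 3)\<^sup>2" using s by (intro power_mono) auto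
    moreover have "0 < (r - n / 3) * (r - n / 6)"
      using s \<open>s < r\<close> by (intro mult_pos_pos) auto
    ultimately show False by (simp add: power2_eq_square algebra_simps)
  next
    case False
    with b have "b = s" by simp
    show False
    proof (cases "s \<in> set rest")
      case True
      have "s * (s - t) \<le> (\<Sum>x\<leftarrow>rest. x * (x - t))"
        using True weight_nonneg unfolding L by (intro member_le_sum_list) auto
      then have "(real r)\<^sup>2 + 3 * s\<^sup>2 \<le> real n * real r"
        using w_top w_rest weight_ge_square[of r] weight_ge_square[of s] \<open>a = r\<close> \<open>b = s\<close> \<open>1 \<le> s\<close> by simp
      moreover have "s\<^sup>2 \<ge> (n / 3)\<^sup>2" using s by (intro power_mono) auto
      moreover have "0 \<le> (r - n / 2)\<^sup>2" by simp
      moreover have "0 < (real n)\<^sup>2" using n3 by simp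
      ultimately show False by (simp add: power2_eq_square algebra_simps)
    next
      case False
      then have "\<forall>x\<in>set rest. x = t"
        using order(3) \<open>s < r\<close> L_subset unfolding L by fastforce
      moreover have "L = r # s # s # rest"
        using L \<open>a = r\<close> \<open>b = s\<close> by simp
      ultimately show False
        using spectrum_r_s_s_t_impossible s(1) \<open>s < r\<close> n3 by blast
    qed
  qed
qed

theorem third_largest_lt:
  assumes n3: "3 \<le> n" and sorted: "sorted_wrt (\<ge>) L"
  shows "L ! 2 < n / 3"
proof (rule ccontr)
  assume "\<not> L ! 2 < n / 3"
  obtain a b c rest where L: "L = a # b # c # rest"
    using length_L n3 by (auto simp: numeral_3_eq_3 Suc_le_length_iff)
  have c: "n / 3 \<le> c" using \<open>\<not> L ! 2 < n / 3\<close> unfolding L by simp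
  then have "1 \<le> c" using n3 by simp
  show False
  proof (cases "c = r")
    case False
    then have "c = s" using L_subset t_nonpos \<open>1 \<le> c\<close> unfolding L by auto
    then show False using third_largest_eq_s_impossible L sorted c False n3 by blast
  next
    case True
    then have r_pos: "0 < r" using \<open>1 \<le> c\<close> by simp
    have "real r \<le> b" "b \<le> a" using sorted True unfolding L by auto
    then have "a = r" "b = r"
      using L_subset t_nonpos s_le_r[OF r_pos] r_pos unfolding L by auto
    then have "3 * (r + 1) \<le> n"
      using degree_multiplicity_bound[OF r_pos] True unfolding L by (simp add: order_trans[rotated])
    then have "real (3 * (r + 1)) \<le> real n" by (simp only: of_nat_le_iff)
    then show False using c True by simp
  qed
qed

end

lemma strongly_regular_common_neighbours:
  assumes "strongly_regular n E r e f" "i < n" "j < n"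
  shows "card (neighbours n E i \<inter> neighbours n E j) = (if i = j then r else if E i j then e else f)"
  using assms unfolding strongly_regular_def by auto

lemma strongly_regular_f_le_r:
  assumes "strongly_regular n E r e f" "i < n" "j < n" "i \<noteq> j" "\<not> E i j"
  shows "f \<le> r"
proof -
  have "f = card (neighbours n E i \<inter> neighbours n E j)"
    using strongly_regular_common_neighbours[OF assms(1-3)] assms(4,5) by simp
  also have "\<dots> \<le> card (neighbours n E i)"
    by (intro card_mono) (auto simp: neighbours_def)
  finally show ?thesis
    using assms(1,2) unfolding strongly_regular_def by simp
qed

lemma strongly_regular_e_less_r:
  assumes "strongly_regular n E r e f" "i < n" "j < n" "E i j"
  shows "e < r"
proof -
  have "i \<noteq> j" "\<not> E j j"
    using assms unfolding strongly_regular_def simple_graph_def by auto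
  then have "e = card (neighbours n E i \<inter> neighbours n E j)"
    using strongly_regular_common_neighbours[OF assms(1-3)] assms(4) by simp
  also have "\<dots> < card (neighbours n E i)"
    using assms \<open>\<not> E j j\<close> by (intro psubset_card_mono) (auto simp: neighbours_def)
  finally show ?thesis
    using assms(1,2) unfolding strongly_regular_def by simp
qed

text \<open>If \<open>G\<close> is complete (has no edges), the definition leaves \<open>f\<close> (\<open>e\<close>) unconstrained; replacing it
  by \<open>0\<close> gives parameters obeying the usual bounds.\<close>

lemma strongly_regular_normalise_parameters:
  assumes srg: "strongly_regular n E r e f"
  obtains e' f' where "strongly_regular n E r e' f'" "f' \<le> r" "0 < r \<Longrightarrow> e' < r"
proof -
  define e' where "e' = (if \<exists>i<n. \<exists>j<n. i \<noteq> j \<and> E i j then e else 0)"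
  define f' where "f' = (if \<exists>i<n. \<exists>j<n. i \<noteq> j \<and> \<not> E i j then f else 0)"
  have srg': "strongly_regular n E r e' f'"
    using srg unfolding strongly_regular_def e'_def f'_def by auto
  moreover have "f' \<le> r"
  proof (cases "\<exists>i<n. \<exists>j<n. i \<noteq> j \<and> \<not> E i j")
    case True
    then obtain i j where "i < n" "j < n" "i \<noteq> j" "\<not> E i j" by blast
    then show ?thesis by (rule strongly_regular_f_le_r[OF srg'])
  qed (auto simp: f'_def)
  moreover have "e' < r" if "0 < r"
  proof (cases "n = 0")
    case False
    then have "0 < n" "card (neighbours n E 0) = r"
      using srg unfolding strongly_regular_def by simp_all
    with \<open>0 < r\<close> have "neighbours n E 0 \<noteq> {}" by auto
    then obtain j where "j < n" "E 0 j" unfolding neighbours_def by auto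
    then show ?thesis
      by (rule strongly_regular_e_less_r[OF srg' \<open>0 < n\<close>])
  qed (use that in \<open>simp add: e'_def\<close>)
  ultimately show ?thesis using that by blast
qed

lemma adj_matrix_carrier [simp]: "adj_matrix n E \<in> carrier_mat n n"
  by (simp add: adj_matrix_def)

lemma adj_matrix_dim [simp]: "dim_row (adj_matrix n E) = n" "dim_col (adj_matrix n E) = n"
  by (simp_all add: adj_matrix_def)

lemma adj_matrix_index [simp]: "i < n \<Longrightarrow> j < n \<Longrightarrow> adj_matrix n E $$ (i, j) = of_bool (E i j)"
  by (simp add: adj_matrix_def)

lemma neighbours_eq: "neighbours n E i = {0..<n} \<inter> {k. E i k}"
  by (auto simp: neighbours_def)

lemma adj_matrix_row_sums:
  assumes "\<forall>i<n. card (neighbours n E i) = r"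
  shows "adj_matrix n E *\<^sub>v vec n (\<lambda>_. 1) = real r \<cdot>\<^sub>v vec n (\<lambda>_. 1)"
  using assms by (intro eq_vecI) (auto simp: scalar_prod_def sum_of_bool_eq neighbours_eq)

lemma adj_matrix_square:
  assumes srg: "strongly_regular n E r e f"
  shows "adj_matrix n E * adj_matrix n E
    = (real r - real f) \<cdot>\<^sub>m 1\<^sub>m n + (real e - real f) \<cdot>\<^sub>m adj_matrix n E + real f \<cdot>\<^sub>m mat n n (\<lambda>_. 1)"
    (is "_ = ?M")
proof (rule eq_matI)
  fix i l assume "i < dim_row ?M" "l < dim_col ?M"
  then have il: "i < n" "l < n" by auto
  have sym: "E j l = E l j" if "j < n" for j
    using srg il that unfolding strongly_regular_def simple_graph_def by blast
  have "(adj_matrix n E * adj_matrix n E) $$ (i, l) = card (neighbours n E i \<inter> neighbours n E l)"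
    using il sym by (auto simp: scalar_prod_def neighbours_eq intro!: arg_cong[where f = card])
  also have "\<dots> = ?M $$ (i, l)"
    using strongly_regular_common_neighbours[OF srg il] il srg
    unfolding strongly_regular_def simple_graph_def by auto
  finally show "(adj_matrix n E * adj_matrix n E) $$ (i, l) = ?M $$ (i, l)" .
qed auto

lemma adj_matrix_char_poly_splits:
  assumes srg: "strongly_regular n E r e f" and "f \<le> r"
  obtains es where "char_poly (adj_matrix n E) = (\<Prod>x\<leftarrow>es. [:- x, 1:])" "length es = n"
proof -
  let ?A = "adj_matrix n E" and ?k = "real e - real f" and ?R = "real r - real f"
  let ?Ac = "map_mat complex_of_real ?A" and ?ones = "vec n (\<lambda>_. 1)"
  have "?Ac *\<^sub>v map_vec complex_of_real ?ones = map_vec complex_of_real (?A *\<^sub>v ?ones)"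
    by (rule of_real_hom.mult_mat_vec_hom[symmetric]) auto
  moreover have "map_vec complex_of_real ?ones = ?ones" by auto
  moreover have "?A *\<^sub>v ?ones = real r \<cdot>\<^sub>v ?ones"
    using srg by (intro adj_matrix_row_sums) (simp add: strongly_regular_def)
  ultimately have rows: "?Ac *\<^sub>v ?ones = complex_of_real r \<cdot>\<^sub>v ?ones"
    by (simp add: of_real_hom.vec_hom_smult)
  have "?Ac * ?Ac = map_mat complex_of_real (?A * ?A)"
    by (rule of_real_hom.mat_hom_mult[symmetric]) auto
  also have "\<dots> = of_real ?R \<cdot>\<^sub>m 1\<^sub>m n + of_real ?k \<cdot>\<^sub>m ?Ac + of_real f \<cdot>\<^sub>m mat n n (\<lambda>_. 1)"
    unfolding adj_matrix_square[OF srg] by (rule eq_matI) auto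
  finally have square: "?Ac * ?Ac = \<dots>" .
  have "\<mu> \<in> \<real>" if "eigenvalue ?Ac \<mu>" for \<mu>
  proof -
    have "(\<mu> - of_real r) * (\<mu>\<^sup>2 - of_real ?k * \<mu> - of_real ?R) = 0"
      using rows square that by (intro eigenvalue_root_of_quadratic_relation) auto
    moreover have "0 \<le> ?k\<^sup>2 + 4 * ?R" using \<open>f \<le> r\<close> by simp
    ultimately show ?thesis
      using Reals_if_root_of_real_quadratic[of \<mu> ?k ?R] by auto
  qed
  then show ?thesis
    using char_poly_splits_if_eigenvalues_real[OF adj_matrix_carrier] that by blast
qed

lemma mat_trace_adj_matrix: "simple_graph n E \<Longrightarrow> mat_trace (adj_matrix n E) = 0"
  by (simp add: mat_trace_def simple_graph_def)

lemma mat_trace_adj_matrix_square: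
  assumes "strongly_regular n E r e f"
  shows "mat_trace (adj_matrix n E * adj_matrix n E) = real n * real r"
proof -
  have "(adj_matrix n E * adj_matrix n E) $$ (i, i) = real r" if "i < n" for i
    using that assms unfolding adj_matrix_square[OF assms]
    by (simp add: strongly_regular_def simple_graph_def)
  then show ?thesis by (simp add: mat_trace_def)
qed

lemma adj_matrix_spectrum:
  assumes srg: "strongly_regular n E r e f" and "f \<le> r" and "0 < n"
  obtains es where "char_poly (adj_matrix n E) = (\<Prod>x\<leftarrow>es. [:- x, 1:])" "length es = n"
    and "sum_list es = 0" "(\<Sum>x\<leftarrow>es. x\<^sup>2) = real n * real r" "real r \<in> set es"
    and "\<And>x. x \<in> set es \<Longrightarrow> x = r \<or> x\<^sup>2 - (real e - real f) * x - (real r - real f) = 0"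
proof -
  let ?A = "adj_matrix n E" and ?ones = "vec n (\<lambda>_. 1) :: real vec"
  obtain es where cp: "char_poly ?A = (\<Prod>x\<leftarrow>es. [:- x, 1:])" and len: "length es = n"
    by (rule adj_matrix_char_poly_splits[OF srg \<open>f \<le> r\<close>])
  have eigenvalue_iff: "eigenvalue ?A x \<longleftrightarrow> x \<in> set es" for x
    unfolding eigenvalue_root_char_poly[OF adj_matrix_carrier] cp
    by (auto simp: poly_prod_list prod_list_zero_iff)
  have rows: "?A *\<^sub>v ?ones = real r \<cdot>\<^sub>v ?ones"
    using srg by (intro adj_matrix_row_sums) (simp add: strongly_regular_def)
  have roots: "x = r \<or> x\<^sup>2 - (real e - real f) * x - (real r - real f) = 0" if "x \<in> set es" for x
    using eigenvalue_root_of_quadratic_relation[OF adj_matrix_carrier rows adj_matrix_square[OF srg]] that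
    unfolding eigenvalue_iff by simp
  have "?ones $ 0 \<noteq> 0\<^sub>v n $ 0" using \<open>0 < n\<close> by simp
  then have "?ones \<noteq> 0\<^sub>v n" by auto
  with rows have "eigenvalue ?A r"
    unfolding eigenvalue_def eigenvector_def by (intro exI[of _ ?ones]) auto
  then have "real r \<in> set es" by (simp only: eigenvalue_iff)
  moreover have "sum_list es = 0"
    using mat_trace_pow_char_poly[OF adj_matrix_carrier cp, of 1] mat_trace_adj_matrix srg
    by (simp add: strongly_regular_def)
  moreover have "(\<Sum>x\<leftarrow>es. x\<^sup>2) = real n * real r"
    using mat_trace_pow_char_poly[OF adj_matrix_carrier cp, of 2] mat_trace_adj_matrix_square[OF srg]
    by (simp add: numeral_2_eq_2)
  ultimately show ?thesis
    using that[OF cp len] roots by blast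
qed

lemma sorted_eigenvalues_desc: "sorted_wrt (\<ge>) (eigenvalues_desc A)"
  by (simp add: eigenvalues_desc_def sorted_wrt_rev)

lemma mset_eigenvalues_desc:
  "char_poly A = (\<Prod>x\<leftarrow>es. [:- x, 1:]) \<Longrightarrow> mset (eigenvalues_desc A) = mset es"
  by (simp add: eigenvalues_desc_def proots_linear_factors)

lemma strongly_regular_spectrum:
  assumes srg: "strongly_regular n E r e f" and "f \<le> r" and "0 < n" and "0 < r \<Longrightarrow> e < r"
  obtains s t where "srg_spectrum n r e f s t (eigenvalues_desc (adj_matrix n E))"
proof -
  obtain es where cp: "char_poly (adj_matrix n E) = (\<Prod>x\<leftarrow>es. [:- x, 1:])" and "length es = n"
    and "sum_list es = 0" "(\<Sum>x\<leftarrow>es. x\<^sup>2) = real n * real r" "real r \<in> set es"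
    and roots: "\<And>x. x \<in> set es \<Longrightarrow> x = r \<or> x\<^sup>2 - (real e - real f) * x - (real r - real f) = 0"
    using adj_matrix_spectrum[OF srg \<open>f \<le> r\<close> \<open>0 < n\<close>] by blast
  have "0 \<le> real r - real f" using \<open>f \<le> r\<close> by simp
  then obtain s t where "t \<le> 0" "0 \<le> s" and st: "s + t = real e - real f" "s * t = - (real r - real f)"
    by (rule real_quadratic_roots_opposite_signs[where k = "real e - real f"])
  have "x\<^sup>2 - (real e - real f) * x - (real r - real f) = (x - s) * (x - t)" for x
  proof -
    have "(x - s) * (x - t) = x\<^sup>2 - (s + t) * x + s * t"
      by (simp add: power2_eq_square algebra_simps)
    then show ?thesis unfolding st by simp
  qed
  then have "set es \<subseteq> {real r, s, t}" using roots by auto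
  have mset: "mset (eigenvalues_desc (adj_matrix n E)) = mset es"
    by (rule mset_eigenvalues_desc[OF cp])
  have "srg_spectrum n r e f s t (eigenvalues_desc (adj_matrix n E))"
    by unfold_locales
      (use \<open>length es = n\<close> \<open>sum_list es = 0\<close> \<open>(\<Sum>x\<leftarrow>es. x\<^sup>2) = real n * real r\<close> \<open>real r \<in> set es\<close>
        \<open>set es \<subseteq> {real r, s, t}\<close> \<open>t \<le> 0\<close> \<open>0 \<le> s\<close> st assms(4) mset_eq_length[OF mset]
        mset_eq_setD[OF mset] sum_list_map_eq_if_mset_eq[OF mset, of "\<lambda>x. x"]
        sum_list_map_eq_if_mset_eq[OF mset, of power2] in simp_all)
  then show ?thesis by (rule that)
qed

theorem theorem3p1:
  fixes n r e f :: nat and E :: "nat \<Rightarrow> nat \<Rightarrow> bool"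
  assumes "strongly_regular n E r e f"
    and "n \<ge> 3"
  shows "lambda3 (adj_matrix n E) < real n / 3"
proof -
  obtain e' f' where srg: "strongly_regular n E r e' f'" and "f' \<le> r" and e'_lt: "0 < r \<Longrightarrow> e' < r"
    using strongly_regular_normalise_parameters[OF assms(1)] by blast
  have "0 < n" using assms(2) by simp
  then obtain s t where spectrum: "srg_spectrum n r e' f' s t (eigenvalues_desc (adj_matrix n E))"
    using strongly_regular_spectrum[OF srg \<open>f' \<le> r\<close> _ e'_lt] by blast
  show ?thesis
    unfolding lambda3_def
    using srg_spectrum.third_largest_lt[OF spectrum assms(2) sorted_eigenvalues_desc] by simp
qed

end
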